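(* Let $R$ be a nonzero commutative ring and let $\mathrm{Rd}(R)$ be endowed with the hull-kernel topology. If $\mathrm{Spec}(R)$ is infinite then $\dim(\mathrm{Rd}(R))=\infty$; if $\mathrm{Spec}(R)$ is finite then $\dim(\mathrm{Rd}(R))=|\mathrm{Spec}(R)|-1$. In all cases $\dim(\mathrm{Rd}(R))\ge\dim(\mathrm{Spec}(R))$. Moreover, if $\mathrm{Spec}(R)$ is linearly ordered by inclusion, then $\dim(\mathrm{Rd}(R))=\dim(\mathrm{Spec}(R))$.
   Context: $\mathrm{Rd}(R)$ is the set of proper radical ideals of $R$; its hull-kernel topology has as subbasis of closed sets the sets $\{H\in\mathrm{Rd}(R)\mid x_1,\dots,x_n\in H\}$ for $x_1,\dots,x_n\in R$. The dimension $\dim$ of a topological space is the supremum of lengths $t$ of chains $Z_0\subsetneq Z_1\subsetneq\dots\subsetneq Z_t$ of irreducible closed subsets; $|\cdot|$ denotes cardinality. *)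

theory Defs
  imports "HOL-Analysis.Analysis" "HOL-Algebra.Algebra" "HOL-Library.Extended_Nat"
begin

definition rad_ideal :: "('a, 'b) ring_scheme \<Rightarrow> 'a set \<Rightarrow> 'a set" where
  "rad_ideal R I = {x \<in> carrier R. \<exists>n::nat. x [^]\<^bsub>R\<^esub> n \<in> I}"

definition Rd :: "('a, 'b) ring_scheme \<Rightarrow> 'a set set" where
  "Rd R = {H. ideal H R \<and> H \<noteq> carrier R \<and> rad_ideal R H = H}"

definition Spec :: "('a, 'b) ring_scheme \<Rightarrow> 'a set set" where
  "Spec R = {P. primeideal P R}"

(* hull-kernel topology on a family X of ideals of R: the sets
   {H \<in> X. x1,...,xn \<in> H} (x1..xn \<in> R) form a subbasis of closed sets.
   On Spec R this is the Zariski topology. *)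
definition hull_kernel_top :: "('a, 'b) ring_scheme \<Rightarrow> 'a set set \<Rightarrow> 'a set topology" where
  "hull_kernel_top R Fam =
     topology_generated_by ((\<lambda>S. Fam - {H \<in> Fam. S \<subseteq> H}) ` {S. finite S \<and> S \<subseteq> carrier R})"

definition irreducible_closed :: "'x topology \<Rightarrow> 'x set \<Rightarrow> bool" where
  "irreducible_closed T Z \<longleftrightarrow> closedin T Z \<and> Z \<noteq> {} \<and>
     (\<forall>A B. closedin T A \<and> closedin T B \<and> Z \<subseteq> A \<union> B \<longrightarrow> Z \<subseteq> A \<or> Z \<subseteq> B)"

definition top_dim :: "'x topology \<Rightarrow> enat" where
  "top_dim T = Sup {enat t | t. \<exists>Z :: nat \<Rightarrow> 'x set.
      (\<forall>i\<le>t. irreducible_closed T (Z i)) \<and> (\<forall>i<t. Z i \<subset> Z (Suc i))}"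

end

theory Submission imports Defs begin

text \<open>Every proper radical ideal \<open>H\<close> is the intersection of the primes containing it, so
  \<open>H \<mapsto> V(H) \<inter> Spec(R)\<close> embeds \<open>Rd(R)\<close> order-reversingly into the subsets of \<open>Spec(R)\<close>.
  Closed sets of a hull-kernel topology are closed upwards, so every \<open>V(H)\<close> is irreducible
  and a strictly descending chain in \<open>Rd(R)\<close> gives an equally long chain of irreducible closed
  sets. Removing a minimal prime from a finite set \<open>A\<close> of primes strictly enlarges \<open>\<Inter>A\<close>
  (prime avoidance), so \<open>|A|\<close> primes yield a chain of length \<open>|A| - 1\<close>. If \<open>Spec(R)\<close> is finite,
  so is \<open>Rd(R)\<close>; then every irreducible closed set is some \<open>V(H)\<close>, and a chain of them becomes
  a strictly increasing chain of nonempty sets of primes. A closed set \<open>C \<subseteq> Spec(R)\<close> equals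
  \<open>V(\<Inter>C)\<close>, which carries chains from \<open>Spec(R)\<close> to \<open>Rd(R)\<close>. Finally, if the primes form a
  chain, every proper radical ideal is prime, so \<open>Rd(R) = Spec(R)\<close>.\<close>

lemma irreducible_closed_subset_Union:
  assumes Z: "irreducible_closed T Z"
    and "finite F" "\<And>A. A \<in> F \<Longrightarrow> closedin T A" "Z \<subseteq> \<Union>F"
  shows "\<exists>A\<in>F. Z \<subseteq> A"
  using assms(2-4)
proof (induction F rule: finite_induct)
  case empty
  then show ?case using Z by (simp add: irreducible_closed_def)
next
  case (insert A F)
  have "closedin T (\<Union>F)" using insert by (intro closedin_Union) auto
  with insert.prems Z have "Z \<subseteq> A \<or> Z \<subseteq> \<Union>F"
    unfolding irreducible_closed_def by (metis Union_insert insertI1)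
  then show ?case using insert by blast
qed

lemma enat_le_top_dim:
  assumes "\<forall>i\<le>t. irreducible_closed T (Z i)" "\<forall>i<t. Z i \<subset> Z (Suc i)"
  shows "enat t \<le> top_dim T"
  unfolding top_dim_def using assms by (intro Sup_upper) blast

lemma top_dim_leI:
  assumes "\<And>t Z. \<forall>i\<le>t. irreducible_closed T (Z i) \<Longrightarrow> \<forall>i<t. Z i \<subset> Z (Suc i) \<Longrightarrow> enat t \<le> d"
  shows "top_dim T \<le> d"
  unfolding top_dim_def using assms by (auto intro: Sup_least)

lemma card_ge_length_strict_chain:
  assumes "finite A" "\<And>i. i \<le> t \<Longrightarrow> g i \<subseteq> A" "g 0 \<noteq> {}" "\<And>i. i < t \<Longrightarrow> g i \<subset> g (Suc i)"
  shows "Suc t \<le> card A"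
proof -
  have "Suc i \<le> card (g i)" if "i \<le> t" for i
    using that
  proof (induction i)
    case 0
    then show ?case using assms(1-3) finite_subset by (fastforce simp: Suc_le_eq card_gt_0_iff)
  next
    case (Suc i)
    have "finite (g (Suc i))" using assms(1,2) Suc.prems finite_subset by blast
    then have "card (g i) < card (g (Suc i))"
      using assms(4) Suc.prems by (simp add: psubset_card_mono)
    with Suc show ?case by simp
  qed
  also have "card (g t) \<le> card A" using assms(1,2) by (simp add: card_mono)
  finally show ?thesis by simp
qed

definition supersets_in :: "'a set set \<Rightarrow> 'a set \<Rightarrow> 'a set set" where
  "supersets_in Fam S = {H \<in> Fam. S \<subseteq> H}"

lemma openin_hull_kernel_top_iff:
  "openin (hull_kernel_top R Fam) U \<longleftrightarrow>
   generate_topology_on ((\<lambda>S. Fam - supersets_in Fam S) ` {S. finite S \<and> S \<subseteq> carrier R}) U"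
  unfolding hull_kernel_top_def supersets_in_def by (rule openin_topology_generated_by_iff)

lemma openin_hull_kernel_top_downward:
  assumes "openin (hull_kernel_top R Fam) U" "K \<in> U" "H \<in> Fam" "H \<subseteq> K"
  shows "H \<in> U"
proof -
  have "\<forall>K\<in>U. \<forall>H\<in>Fam. H \<subseteq> K \<longrightarrow> H \<in> U"
    using assms(1) unfolding openin_hull_kernel_top_iff
  proof (induction rule: generate_topology_on.induct)
    case (Basis s)
    then show ?case unfolding supersets_in_def by blast
  qed blast+
  then show ?thesis using assms(2-4) by blast
qed

context
  fixes R :: "('a, 'b) ring_scheme" and Fam :: "'a set set"
  assumes proper: "\<forall>H\<in>Fam. H \<subset> carrier R"
begin

lemma topspace_hull_kernel_top: "topspace (hull_kernel_top R Fam) = Fam"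
  unfolding hull_kernel_top_def topology_generated_by_topspace
proof (intro equalityI subsetI)
  fix H assume H: "H \<in> Fam"
  then obtain x where "x \<in> carrier R" "x \<notin> H" using proper by blast
  with H show "H \<in> \<Union> ((\<lambda>S. Fam - {H \<in> Fam. S \<subseteq> H}) ` {S. finite S \<and> S \<subseteq> carrier R})"
    by (intro UN_I[of "{x}"]) auto
qed blast

lemma closedin_supersets_in:
  assumes "S \<subseteq> carrier R"
  shows "closedin (hull_kernel_top R Fam) (supersets_in Fam S)"
proof -
  have "Fam - supersets_in Fam S = (\<Union>s\<in>S. Fam - supersets_in Fam {s})"
    by (auto simp: supersets_in_def)
  moreover have "openin (hull_kernel_top R Fam) (Fam - supersets_in Fam {s})" if "s \<in> S" for s
    unfolding openin_hull_kernel_top_iff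
    by (rule generate_topology_on.Basis) (use that assms in \<open>auto intro: image_eqI[of _ _ "{s}"]\<close>)
  ultimately have "openin (hull_kernel_top R Fam) (Fam - supersets_in Fam S)"
    by (metis (no_types, lifting) imageE openin_Union)
  then show ?thesis
    unfolding closedin_def topspace_hull_kernel_top by (auto simp: supersets_in_def)
qed

lemma closedin_hull_kernel_top_upward:
  assumes C: "closedin (hull_kernel_top R Fam) C" and "H \<in> C" "K \<in> Fam" "H \<subseteq> K"
  shows "K \<in> C"
proof (rule ccontr)
  assume "K \<notin> C"
  have "openin (hull_kernel_top R Fam) (Fam - C)" "C \<subseteq> Fam"
    using C unfolding closedin_def topspace_hull_kernel_top by auto
  then show False
    using openin_hull_kernel_top_downward[of R Fam "Fam - C" K H] assms \<open>K \<notin> C\<close> by blast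
qed

lemma irreducible_closed_supersets_in:
  assumes H: "H \<in> Fam"
  shows "irreducible_closed (hull_kernel_top R Fam) (supersets_in Fam H)"
  unfolding irreducible_closed_def
proof (intro conjI allI impI)
  show "closedin (hull_kernel_top R Fam) (supersets_in Fam H)"
    using H proper by (intro closedin_supersets_in) auto
  show "supersets_in Fam H \<noteq> {}" using H by (auto simp: supersets_in_def)
  fix A B assume AB: "closedin (hull_kernel_top R Fam) A \<and> closedin (hull_kernel_top R Fam) B
    \<and> supersets_in Fam H \<subseteq> A \<union> B"
  then have "H \<in> A \<or> H \<in> B" using H by (auto simp: supersets_in_def)
  then show "supersets_in Fam H \<subseteq> A \<or> supersets_in Fam H \<subseteq> B"
    using AB closedin_hull_kernel_top_upward by (auto simp: supersets_in_def)
qed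

lemma enat_le_top_dim_hull_kernel_top:
  assumes "\<forall>i\<le>t. H i \<in> Fam" "\<forall>i<t. H (Suc i) \<subset> H i"
  shows "enat t \<le> top_dim (hull_kernel_top R Fam)"
proof (rule enat_le_top_dim)
  show "\<forall>i\<le>t. irreducible_closed (hull_kernel_top R Fam) (supersets_in Fam (H i))"
    using assms irreducible_closed_supersets_in by blast
  show "\<forall>i<t. supersets_in Fam (H i) \<subset> supersets_in Fam (H (Suc i))"
  proof (intro allI impI)
    fix i assume "i < t"
    then have "H (Suc i) \<in> Fam" "H (Suc i) \<subset> H i" using assms by (simp_all add: Suc_leI)
    then show "supersets_in Fam (H i) \<subset> supersets_in Fam (H (Suc i))"
      unfolding supersets_in_def by blast
  qed
qed

lemma irreducible_closed_finite_eq_supersets_in: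
  assumes "finite Fam" and Z: "irreducible_closed (hull_kernel_top R Fam) Z"
  obtains H where "H \<in> Z" "Z = supersets_in Fam H"
proof -
  have Zc: "closedin (hull_kernel_top R Fam) Z"
    using Z by (simp add: irreducible_closed_def)
  then have ZF: "Z \<subseteq> Fam"
    using closedin_subset topspace_hull_kernel_top by blast
  have "\<exists>A\<in>supersets_in Fam ` Z. Z \<subseteq> A"
  proof (rule irreducible_closed_subset_Union[OF Z])
    show "finite (supersets_in Fam ` Z)"
      using ZF assms(1) finite_subset by blast
    show "closedin (hull_kernel_top R Fam) A" if "A \<in> supersets_in Fam ` Z" for A
      using that ZF proper closedin_supersets_in by blast
    show "Z \<subseteq> \<Union> (supersets_in Fam ` Z)"
      using ZF by (auto simp: supersets_in_def)
  qed
  then obtain H where "H \<in> Z" "Z \<subseteq> supersets_in Fam H" by blast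
  moreover have "supersets_in Fam H \<subseteq> Z"
    using closedin_hull_kernel_top_upward[OF Zc \<open>H \<in> Z\<close>] by (auto simp: supersets_in_def)
  ultimately show ?thesis using that by blast
qed

lemma irreducible_closed_chain_finite_obtains_descending:
  assumes fin: "finite Fam"
    and Z: "\<forall>i\<le>t. irreducible_closed (hull_kernel_top R Fam) (Z i)" "\<forall>i<t. Z i \<subset> Z (Suc i)"
  obtains H where "\<forall>i\<le>t. H i \<in> Fam" "\<forall>i<t. H (Suc i) \<subset> H i"
proof -
  define H where "H i = (SOME H. H \<in> Z i \<and> Z i = supersets_in Fam H)" for i
  have H: "H i \<in> Z i" "Z i = supersets_in Fam (H i)" if "i \<le> t" for i
  proof -
    have "irreducible_closed (hull_kernel_top R Fam) (Z i)" using Z(1) that by blast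
    then obtain K where "K \<in> Z i" "Z i = supersets_in Fam K"
      by (rule irreducible_closed_finite_eq_supersets_in[OF fin])
    then have "\<exists>K. K \<in> Z i \<and> Z i = supersets_in Fam K" by blast
    then have HZ: "H i \<in> Z i \<and> Z i = supersets_in Fam (H i)"
      unfolding H_def by (rule someI_ex)
    show "H i \<in> Z i" using HZ by (rule conjunct1)
    show "Z i = supersets_in Fam (H i)" using HZ by (rule conjunct2)
  qed
  have "H i \<in> Fam" if "i \<le> t" for i
    using H[OF that] unfolding supersets_in_def by blast
  moreover have "H (Suc i) \<subset> H i" if "i < t" for i
  proof -
    have i: "i \<le> t" "Suc i \<le> t" using that by auto
    have psub: "Z i \<subset> Z (Suc i)" using Z(2) that by blast
    then have "H i \<in> Z (Suc i)" using H(1)[OF i(1)] by blast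
    then have "H (Suc i) \<subseteq> H i" using H(2)[OF i(2)] unfolding supersets_in_def by blast
    moreover have "H (Suc i) \<noteq> H i" using H(2)[OF i(1)] H(2)[OF i(2)] psub by auto
    ultimately show ?thesis by blast
  qed
  ultimately show ?thesis using that by blast
qed

end

lemma Spec_psubset_carrier: "P \<in> Spec R \<Longrightarrow> P \<subset> carrier R"
proof -
  assume "P \<in> Spec R"
  then interpret primeideal P R by (simp add: Spec_def)
  show ?thesis using a_subset I_notcarr by blast
qed

context cring
begin

lemma power_in_ideal_plus_principal:
  assumes M: "ideal M R" and a: "a \<in> carrier R" and x: "x \<in> carrier R" "x \<notin> M"
    and maximal: "\<And>J. ideal J R \<Longrightarrow> M \<subset> J \<Longrightarrow> \<exists>n::nat. a [^] n \<in> J"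
  shows "\<exists>m::nat. \<exists>u\<in>M. \<exists>r\<in>carrier R. a [^] m = u \<oplus> r \<otimes> x"
proof -
  interpret M: ideal M R by (rule M)
  let ?J = "M <+>\<^bsub>R\<^esub> PIdl x"
  have mem: "u \<oplus> r \<otimes> x \<in> ?J" if "u \<in> M" "r \<in> carrier R" for u r
    using that unfolding set_add_def' cgenideal_def by blast
  have "M \<subseteq> ?J"
  proof
    fix u assume "u \<in> M"
    then show "u \<in> ?J" using mem[of u \<zero>] x M.Icarr by simp
  qed
  moreover have "x \<in> ?J" using mem[of \<zero> \<one>] x by simp
  ultimately have "M \<subset> ?J" using x by blast
  then obtain m :: nat where "a [^] m \<in> ?J"
    using maximal add_ideals[OF M cgenideal_ideal[OF x(1)]] by blast
  then show ?thesis unfolding set_add_def' cgenideal_def by blast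
qed

lemma primeideal_if_maximal_avoiding_powers:
  assumes M: "ideal M R" and a: "a \<in> carrier R" and avoid: "\<And>n::nat. a [^] n \<notin> M"
    and maximal: "\<And>J. ideal J R \<Longrightarrow> M \<subset> J \<Longrightarrow> \<exists>n::nat. a [^] n \<in> J"
  shows "primeideal M R"
proof (rule primeidealI[OF M is_cring])
  interpret M: ideal M R by (rule M)
  show "carrier R \<noteq> M" using avoid[of 0] by auto
  fix x y assume xy: "x \<in> carrier R" "y \<in> carrier R" "x \<otimes> y \<in> M"
  show "x \<in> M \<or> y \<in> M"
  proof (rule ccontr)
    assume "\<not> (x \<in> M \<or> y \<in> M)"
    then obtain m u r n v s where u: "u \<in> M" "r \<in> carrier R" "a [^] (m::nat) = u \<oplus> r \<otimes> x"
      and v: "v \<in> M" "s \<in> carrier R" "a [^] (n::nat) = v \<oplus> s \<otimes> y"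
      using power_in_ideal_plus_principal[OF M a _ _ maximal] xy by meson
    have uv: "u \<in> carrier R" "v \<in> carrier R" using u v M.Icarr by auto
    define w where "w = v \<oplus> s \<otimes> y"
    have w: "w \<in> carrier R" using uv v xy by (simp add: w_def)
    have "a [^] (m + n) = a [^] m \<otimes> a [^] n" using a by (simp add: nat_pow_mult)
    also have "\<dots> = u \<otimes> w \<oplus> (r \<otimes> x) \<otimes> w"
      using u v uv w xy by (simp add: w_def l_distr)
    also have "(r \<otimes> x) \<otimes> w = (r \<otimes> x) \<otimes> v \<oplus> (r \<otimes> s) \<otimes> (x \<otimes> y)"
      using u v uv xy by (simp add: w_def r_distr m_ac)
    finally have "a [^] (m + n) = u \<otimes> w \<oplus> ((r \<otimes> x) \<otimes> v \<oplus> (r \<otimes> s) \<otimes> (x \<otimes> y))" .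
    moreover have "u \<otimes> w \<oplus> ((r \<otimes> x) \<otimes> v \<oplus> (r \<otimes> s) \<otimes> (x \<otimes> y)) \<in> M"
      using u v w xy by (simp add: M.I_r_closed M.I_l_closed M.a_closed)
    ultimately show False using avoid by metis
  qed
qed

lemma exists_primeideal_avoiding_powers:
  assumes I: "ideal I R" and a: "a \<in> carrier R" and avoid: "\<And>n::nat. a [^] n \<notin> I"
  obtains P where "primeideal P R" "I \<subseteq> P" "a \<notin> P"
proof -
  define S where "S = {J. ideal J R \<and> I \<subseteq> J \<and> (\<forall>n::nat. a [^] n \<notin> J)}"
  have "\<exists>M\<in>S. \<forall>J\<in>S. M \<subseteq> J \<longrightarrow> J = M"
  proof (rule subset_Zorn)
    fix C assume C: "subset.chain S C"
    show "\<exists>U\<in>S. \<forall>J\<in>C. J \<subseteq> U"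
    proof (cases "C = {}")
      case True
      then show ?thesis using I avoid by (auto simp: S_def)
    next
      case False
      have "subset.chain {J. ideal J R} C"
        using C unfolding pred_on.chain_def S_def by auto
      from chain_Union_is_ideal[OF this] have "ideal (\<Union>C) R" using False by simp
      moreover have "I \<subseteq> \<Union>C" using False C unfolding pred_on.chain_def S_def by blast
      moreover have "\<forall>n::nat. a [^] n \<notin> \<Union>C" using C unfolding pred_on.chain_def S_def by auto
      ultimately show ?thesis unfolding S_def by blast
    qed
  qed
  then obtain M where "M \<in> S" and Mmax: "\<And>J. J \<in> S \<Longrightarrow> M \<subseteq> J \<Longrightarrow> J = M" by blast
  then have M: "ideal M R" "I \<subseteq> M" "\<And>n::nat. a [^] n \<notin> M" by (auto simp: S_def)
  have "primeideal M R"
  proof (rule primeideal_if_maximal_avoiding_powers[OF M(1) a M(3)])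
    fix J assume "ideal J R" "M \<subset> J"
    then show "\<exists>n::nat. a [^] n \<in> J" using Mmax[of J] M(2) unfolding S_def by blast
  qed
  moreover have "a \<notin> M" using M(3)[of 1] a by simp
  ultimately show ?thesis using that M(2) by blast
qed

lemma Spec_nonempty:
  assumes "\<one> \<noteq> \<zero>"
  shows "Spec R \<noteq> {}"
proof -
  have "\<one> [^] n \<notin> {\<zero>}" for n :: nat using assms by simp
  then obtain P where "primeideal P R"
    using exists_primeideal_avoiding_powers[OF zeroideal one_closed] by blast
  then show ?thesis by (auto simp: Spec_def)
qed

lemma primeideal_mem_if_pow_mem:
  assumes P: "primeideal P R" and x: "x \<in> carrier R"
  shows "x [^] (n::nat) \<in> P \<Longrightarrow> x \<in> P"
proof (induction n)
  case 0
  interpret P: primeideal P R by (rule P)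
  from 0 show ?case using P.one_imp_carrier P.I_notcarr by simp
next
  case (Suc n)
  then have "x [^] n \<otimes> x \<in> P" by simp
  then have "x [^] n \<in> P \<or> x \<in> P" using primeideal.I_prime[OF P _ x] x by simp
  then show ?case using Suc.IH by blast
qed

lemma Inter_Spec_in_Rd:
  assumes A: "A \<subseteq> Spec R" "A \<noteq> {}"
  shows "\<Inter>A \<in> Rd R"
proof -
  have prime: "\<And>P. P \<in> A \<Longrightarrow> primeideal P R" using A by (auto simp: Spec_def)
  obtain P0 where "P0 \<in> A" using A by blast
  then have proper: "\<Inter>A \<subset> carrier R" using A Spec_psubset_carrier[of P0 R] by blast
  have "ideal (\<Inter>A) R" using prime A by (intro i_Intersect) (auto simp: primeideal_def)
  moreover have "rad_ideal R (\<Inter>A) \<subseteq> \<Inter>A"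
    using prime primeideal_mem_if_pow_mem unfolding rad_ideal_def by blast
  moreover have "\<Inter>A \<subseteq> rad_ideal R (\<Inter>A)"
  proof
    fix x assume "x \<in> \<Inter>A"
    then show "x \<in> rad_ideal R (\<Inter>A)"
      using proper unfolding rad_ideal_def by (auto intro!: exI[of _ "1::nat"])
  qed
  ultimately show ?thesis using proper by (simp add: Rd_def)
qed

lemma Spec_subset_Rd: "Spec R \<subseteq> Rd R"
proof
  fix P assume "P \<in> Spec R"
  then show "P \<in> Rd R" using Inter_Spec_in_Rd[of "{P}"] by simp
qed

lemma Rd_psubset_carrier: "\<forall>H\<in>Rd R. H \<subset> carrier R"
  unfolding Rd_def by (auto dest: ideal.Icarr)

lemma Rd_exists_Spec_above_avoiding:
  assumes H: "H \<in> Rd R" and x: "x \<in> carrier R" "x \<notin> H"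
  obtains P where "P \<in> Spec R" "H \<subseteq> P" "x \<notin> P"
proof -
  have "x [^] n \<notin> H" for n :: nat
  proof
    assume "x [^] n \<in> H"
    then have "x \<in> rad_ideal R H" using x unfolding rad_ideal_def by blast
    then show False using H x by (simp add: Rd_def)
  qed
  moreover have "ideal H R" using H by (simp add: Rd_def)
  ultimately obtain P where "primeideal P R" "H \<subseteq> P" "x \<notin> P"
    using exists_primeideal_avoiding_powers x(1) by metis
  then show ?thesis using that by (simp add: Spec_def)
qed

lemma Rd_Spec_above_nonempty:
  assumes H: "H \<in> Rd R"
  shows "supersets_in (Spec R) H \<noteq> {}"
proof -
  have "\<one> \<notin> H"
    using H Rd_psubset_carrier ideal.one_imp_carrier[of H R] by (auto simp: Rd_def)
  then obtain P where "P \<in> Spec R" "H \<subseteq> P"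
    using Rd_exists_Spec_above_avoiding[OF H one_closed] by blast
  then show ?thesis by (auto simp: supersets_in_def)
qed

lemma Rd_eq_Inter_Spec_above:
  assumes H: "H \<in> Rd R"
  shows "H = \<Inter>(supersets_in (Spec R) H)"
proof
  show "H \<subseteq> \<Inter>(supersets_in (Spec R) H)" by (auto simp: supersets_in_def)
  show "\<Inter>(supersets_in (Spec R) H) \<subseteq> H"
  proof
    fix x assume x: "x \<in> \<Inter>(supersets_in (Spec R) H)"
    obtain P0 where "P0 \<in> supersets_in (Spec R) H" using Rd_Spec_above_nonempty[OF H] by blast
    then have "x \<in> carrier R"
      using x Spec_psubset_carrier[of P0 R] by (auto simp: supersets_in_def)
    show "x \<in> H"
    proof (rule ccontr)
      assume "x \<notin> H"
      then obtain P where "P \<in> Spec R" "H \<subseteq> P" "x \<notin> P"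
        using Rd_exists_Spec_above_avoiding[OF H \<open>x \<in> carrier R\<close>] by blast
      then show False using x by (auto simp: supersets_in_def)
    qed
  qed
qed

lemma inj_on_Spec_above_Rd: "inj_on (supersets_in (Spec R)) (Rd R)"
  by (rule inj_onI) (metis Rd_eq_Inter_Spec_above)

lemma Spec_above_psubset_if_Rd_psubset:
  assumes "H \<in> Rd R" "K \<in> Rd R" "K \<subset> H"
  shows "supersets_in (Spec R) H \<subset> supersets_in (Spec R) K"
proof -
  have "supersets_in (Spec R) H \<subseteq> supersets_in (Spec R) K"
    using assms(3) by (auto simp: supersets_in_def)
  moreover have "supersets_in (Spec R) H \<noteq> supersets_in (Spec R) K"
    using inj_on_Spec_above_Rd assms unfolding inj_on_def by blast
  ultimately show ?thesis by blast
qed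

lemma finite_Rd: "finite (Spec R) \<Longrightarrow> finite (Rd R)"
  by (rule inj_on_finite[OF inj_on_Spec_above_Rd, of "Pow (Spec R)"]) (auto simp: supersets_in_def)

lemma primeideal_contains_member_if_contains_Inter:
  assumes "finite B" "B \<noteq> {}" "\<And>J. J \<in> B \<Longrightarrow> ideal J R" "primeideal Q R" "\<Inter>B \<subseteq> Q"
  shows "\<exists>J\<in>B. J \<subseteq> Q"
  using assms
proof (induction B rule: finite_ne_induct)
  case (singleton J)
  then show ?case by simp
next
  case (insert J B)
  have ideals: "ideal J R" "\<And>I. I \<in> B \<Longrightarrow> ideal I R" using insert.prems(1) by auto
  show ?case
  proof (rule ccontr)
    assume none: "\<not> (\<exists>I\<in>insert J B. I \<subseteq> Q)"
    then have "\<not> \<Inter>B \<subseteq> Q" using insert.IH ideals(2) insert.prems(2) by blast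
    then obtain b where b: "b \<in> \<Inter>B" "b \<notin> Q" by blast
    obtain a where a: "a \<in> J" "a \<notin> Q" using none by blast
    obtain I0 where "I0 \<in> B" using insert.hyps by blast
    have ab: "a \<in> carrier R" "b \<in> carrier R"
      using ideal.Icarr[OF ideals(1) a(1)] ideal.Icarr[OF ideals(2)[OF \<open>I0 \<in> B\<close>]] b(1) \<open>I0 \<in> B\<close>
      by auto
    have "a \<otimes> b \<in> J" using ideal.I_r_closed[OF ideals(1) a(1) ab(2)] .
    moreover have "a \<otimes> b \<in> I" if "I \<in> B" for I
      using ideal.I_l_closed[OF ideals(2)[OF that] _ ab(1)] b(1) that by blast
    ultimately have "a \<otimes> b \<in> Q" using insert.prems(3) by blast
    then show False using primeideal.I_prime[OF insert.prems(2) ab] a b by blast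
  qed
qed

lemma Inter_Spec_psubset_remove_minimal:
  assumes A: "finite A" "A \<subseteq> Spec R" and Q: "Q \<in> A" "\<forall>P\<in>A. P \<subseteq> Q \<longrightarrow> Q = P"
    and nonempty: "A - {Q} \<noteq> {}"
  shows "\<Inter>A \<subset> \<Inter>(A - {Q})"
proof -
  have "\<not> \<Inter>(A - {Q}) \<subseteq> Q"
  proof
    assume sub: "\<Inter>(A - {Q}) \<subseteq> Q"
    have ideals: "ideal J R" if "J \<in> A - {Q}" for J
      using that A(2) primeideal.axioms(1) unfolding Spec_def by blast
    have "primeideal Q R" using Q(1) A(2) unfolding Spec_def by blast
    with primeideal_contains_member_if_contains_Inter[OF _ nonempty ideals] A(1) sub
    obtain P where "P \<in> A - {Q}" "P \<subseteq> Q" by blast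
    then show False using Q by blast
  qed
  moreover have "\<Inter>A = Q \<inter> \<Inter>(A - {Q})" using Q(1) by blast
  moreover have "Q \<inter> T \<subset> T" if "\<not> T \<subseteq> Q" for T using that by blast
  ultimately show ?thesis by simp
qed

lemma Rd_descending_chain_from_Spec_subset:
  "finite A \<Longrightarrow> A \<subseteq> Spec R \<Longrightarrow> card A = Suc n \<Longrightarrow>
   \<exists>H. (\<forall>i\<le>n. H i \<in> Rd R) \<and> (\<forall>i<n. H (Suc i) \<subset> H i) \<and> H n = \<Inter>A"
proof (induction n arbitrary: A)
  case 0
  then obtain P where "A = {P}" using card_1_singletonE[of A] by auto
  moreover have "P \<in> Rd R" using 0 Spec_subset_Rd \<open>A = {P}\<close> by blast
  ultimately show ?case by (intro exI[of _ "\<lambda>_. P"]) auto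
next
  case (Suc n)
  have "A \<noteq> {}" using Suc.prems(3) by auto
  then obtain Q where Q: "Q \<in> A" "\<forall>P\<in>A. P \<subseteq> Q \<longrightarrow> Q = P"
    using finite_has_minimal[OF Suc.prems(1)] by blast
  have "finite (A - {Q})" "A - {Q} \<subseteq> Spec R" "card (A - {Q}) = Suc n"
    using Suc.prems Q(1) by auto
  from Suc.IH[OF this] obtain H
    where H: "\<forall>i\<le>n. H i \<in> Rd R" "\<forall>i<n. H (Suc i) \<subset> H i" "H n = \<Inter>(A - {Q})"
    by blast
  have "A - {Q} \<noteq> {}" using \<open>card (A - {Q}) = Suc n\<close> by (metis card.empty nat.distinct(1))
  from Inter_Spec_psubset_remove_minimal[OF Suc.prems(1,2) Q this]
  have strict: "\<Inter>A \<subset> H n" using H(3) by simp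
  have "\<Inter>A \<in> Rd R" using Inter_Spec_in_Rd[OF Suc.prems(2) \<open>A \<noteq> {}\<close>] .
  then have "\<forall>i\<le>Suc n. (H(Suc n := \<Inter>A)) i \<in> Rd R" using H(1) by (simp add: le_Suc_eq)
  moreover have "\<forall>i<Suc n. (H(Suc n := \<Inter>A)) (Suc i) \<subset> (H(Suc n := \<Inter>A)) i"
    using H(2) strict by (simp add: less_Suc_eq)
  ultimately show ?case by (intro exI[of _ "H(Suc n := \<Inter>A)"]) simp
qed

lemma Rd_eq_Spec_if_Spec_linear:
  assumes linear: "\<forall>P\<in>Spec R. \<forall>Q\<in>Spec R. P \<subseteq> Q \<or> Q \<subseteq> P"
  shows "Rd R = Spec R"
proof
  show "Rd R \<subseteq> Spec R"
  proof
    fix H assume H: "H \<in> Rd R"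
    have "primeideal H R"
    proof (rule primeidealI[OF _ is_cring])
      show "ideal H R" "carrier R \<noteq> H" using H by (auto simp: Rd_def)
      fix a b assume ab: "a \<in> carrier R" "b \<in> carrier R" "a \<otimes> b \<in> H"
      show "a \<in> H \<or> b \<in> H"
      proof (rule ccontr)
        assume "\<not> (a \<in> H \<or> b \<in> H)"
        then have "a \<notin> H" "b \<notin> H" by auto
        obtain P where P: "P \<in> Spec R" "H \<subseteq> P" "a \<notin> P"
          using Rd_exists_Spec_above_avoiding[OF H ab(1) \<open>a \<notin> H\<close>] .
        obtain Q where Q: "Q \<in> Spec R" "H \<subseteq> Q" "b \<notin> Q"
          using Rd_exists_Spec_above_avoiding[OF H ab(2) \<open>b \<notin> H\<close>] .
        have "b \<in> P" using P ab primeideal.I_prime[of P R a b] unfolding Spec_def by blast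
        moreover have "a \<in> Q" using Q ab primeideal.I_prime[of Q R a b] unfolding Spec_def by blast
        ultimately show False using linear P Q by blast
      qed
    qed
    then show "H \<in> Spec R" by (simp add: Spec_def)
  qed
qed (rule Spec_subset_Rd)

lemma primeideal_mult_notin_iff:
  assumes "primeideal P R" "a \<in> carrier R" "b \<in> carrier R"
  shows "a \<otimes> b \<notin> P \<longleftrightarrow> a \<notin> P \<and> b \<notin> P"
proof -
  interpret primeideal P R by fact
  show ?thesis using I_prime I_l_closed I_r_closed assms(2,3) by blast
qed

lemma openin_hull_kernel_top_Spec_basic_nbhd:
  assumes Fam: "Fam \<subseteq> Spec R" and U: "openin (hull_kernel_top R Fam) U" and P: "P \<in> U" "P \<in> Fam"
  shows "\<exists>s\<in>carrier R. s \<notin> P \<and> (\<forall>Q\<in>Fam. s \<notin> Q \<longrightarrow> Q \<in> U)"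
proof -
  have notin_mult: "s1 \<otimes> s2 \<notin> Q \<longleftrightarrow> s1 \<notin> Q \<and> s2 \<notin> Q"
    if "Q \<in> Fam" "s1 \<in> carrier R" "s2 \<in> carrier R" for Q s1 s2
    using primeideal_mult_notin_iff[of Q s1 s2] that Fam by (auto simp: Spec_def)
  have "\<forall>P\<in>U \<inter> Fam. \<exists>s\<in>carrier R. s \<notin> P \<and> (\<forall>Q\<in>Fam. s \<notin> Q \<longrightarrow> Q \<in> U)"
    using U unfolding openin_hull_kernel_top_iff
  proof (induction rule: generate_topology_on.induct)
    case (Int a b)
    show ?case
    proof
      fix P assume P: "P \<in> a \<inter> b \<inter> Fam"
      obtain s1 where s1: "s1 \<in> carrier R" "s1 \<notin> P" "\<forall>Q\<in>Fam. s1 \<notin> Q \<longrightarrow> Q \<in> a"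
        using Int.IH(1) P by blast
      obtain s2 where s2: "s2 \<in> carrier R" "s2 \<notin> P" "\<forall>Q\<in>Fam. s2 \<notin> Q \<longrightarrow> Q \<in> b"
        using Int.IH(2) P by blast
      show "\<exists>s\<in>carrier R. s \<notin> P \<and> (\<forall>Q\<in>Fam. s \<notin> Q \<longrightarrow> Q \<in> a \<inter> b)"
        using s1 s2 P notin_mult[OF _ s1(1) s2(1)] by (intro bexI[of _ "s1 \<otimes> s2"]) auto
    qed
  next
    case (UN K)
    show ?case
    proof
      fix P assume "P \<in> \<Union>K \<inter> Fam"
      then obtain k where "k \<in> K" "P \<in> k \<inter> Fam" by blast
      then obtain s where "s \<in> carrier R" "s \<notin> P" "\<forall>Q\<in>Fam. s \<notin> Q \<longrightarrow> Q \<in> k"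
        using UN.IH by blast
      then show "\<exists>s\<in>carrier R. s \<notin> P \<and> (\<forall>Q\<in>Fam. s \<notin> Q \<longrightarrow> Q \<in> \<Union>K)"
        using \<open>k \<in> K\<close> by blast
    qed
  next
    case (Basis u)
    then obtain S where S: "S \<subseteq> carrier R" "u = Fam - supersets_in Fam S" by blast
    show ?case
    proof
      fix P assume "P \<in> u \<inter> Fam"
      then obtain s where "s \<in> S" "s \<notin> P" using S by (auto simp: supersets_in_def)
      then show "\<exists>s\<in>carrier R. s \<notin> P \<and> (\<forall>Q\<in>Fam. s \<notin> Q \<longrightarrow> Q \<in> u)"
        using S by (intro bexI[of _ s]) (auto simp: supersets_in_def)
    qed
  qed simp
  then show ?thesis using P by blast
qed

lemma closedin_hull_kernel_top_Spec_eq: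
  assumes Fam: "Fam \<subseteq> Spec R" and C: "closedin (hull_kernel_top R Fam) C"
  shows "C = supersets_in Fam (\<Inter>C)"
proof
  have topspace: "topspace (hull_kernel_top R Fam) = Fam"
    by (rule topspace_hull_kernel_top) (use Fam Spec_psubset_carrier in blast)
  then show "C \<subseteq> supersets_in Fam (\<Inter>C)"
    using closedin_subset[OF C] by (auto simp: supersets_in_def)
  show "supersets_in Fam (\<Inter>C) \<subseteq> C"
  proof
    fix P assume "P \<in> supersets_in Fam (\<Inter>C)"
    then have P: "P \<in> Fam" "\<Inter>C \<subseteq> P" by (auto simp: supersets_in_def)
    show "P \<in> C"
    proof (rule ccontr)
      assume "P \<notin> C"
      have "openin (hull_kernel_top R Fam) (Fam - C)" "C \<subseteq> Fam"
        using C unfolding closedin_def topspace by auto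
      then obtain s where "s \<notin> P" "\<forall>Q\<in>C. s \<in> Q"
        using openin_hull_kernel_top_Spec_basic_nbhd[OF Fam, of "Fam - C" P] P \<open>P \<notin> C\<close> by blast
      then show False using P by blast
    qed
  qed
qed

lemma enat_le_top_dim_Rd:
  assumes "finite A" "A \<subseteq> Spec R" "card A = Suc n"
  shows "enat n \<le> top_dim (hull_kernel_top R (Rd R))"
proof -
  obtain H where "\<forall>i\<le>n. H i \<in> Rd R" "\<forall>i<n. H (Suc i) \<subset> H i"
    using Rd_descending_chain_from_Spec_subset[OF assms] by blast
  then show ?thesis by (rule enat_le_top_dim_hull_kernel_top[OF Rd_psubset_carrier])
qed

lemma top_dim_Rd_infinite:
  assumes "infinite (Spec R)"
  shows "top_dim (hull_kernel_top R (Rd R)) = \<infinity>"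
proof -
  have le: "enat n \<le> top_dim (hull_kernel_top R (Rd R))" for n
  proof -
    obtain A where "finite A" "card A = Suc n" "A \<subseteq> Spec R"
      using infinite_arbitrarily_large[OF assms] by blast
    then show ?thesis using enat_le_top_dim_Rd by blast
  qed
  show ?thesis
  proof (cases "top_dim (hull_kernel_top R (Rd R))")
    case (enat m)
    then show ?thesis using le[of "Suc m"] by simp
  qed simp
qed

lemma top_dim_Rd_le_card_Spec:
  assumes fin: "finite (Spec R)"
  shows "top_dim (hull_kernel_top R (Rd R)) \<le> enat (card (Spec R) - 1)"
proof (rule top_dim_leI)
  fix t Z assume "\<forall>i\<le>t. irreducible_closed (hull_kernel_top R (Rd R)) (Z i)"
    "\<forall>i<t. Z i \<subset> Z (Suc i)"
  then obtain H where H: "\<forall>i\<le>t. H i \<in> Rd R" "\<forall>i<t. H (Suc i) \<subset> H i"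
    by (rule irreducible_closed_chain_finite_obtains_descending[OF Rd_psubset_carrier finite_Rd[OF fin]])
  have "Suc t \<le> card (Spec R)"
  proof (rule card_ge_length_strict_chain[OF fin, where g = "\<lambda>i. supersets_in (Spec R) (H i)"])
    show "supersets_in (Spec R) (H i) \<subseteq> Spec R" for i by (auto simp: supersets_in_def)
    show "supersets_in (Spec R) (H 0) \<noteq> {}" using Rd_Spec_above_nonempty H(1) by simp
    show "supersets_in (Spec R) (H i) \<subset> supersets_in (Spec R) (H (Suc i))" if "i < t" for i
      using Spec_above_psubset_if_Rd_psubset H that by (simp add: Suc_leI)
  qed
  then show "enat t \<le> enat (card (Spec R) - 1)" by simp
qed

lemma top_dim_Spec_le_top_dim_Rd:
  "top_dim (hull_kernel_top R (Spec R)) \<le> top_dim (hull_kernel_top R (Rd R))"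
proof (rule top_dim_leI)
  fix t Z assume Z: "\<forall>i\<le>t. irreducible_closed (hull_kernel_top R (Spec R)) (Z i)"
    "\<forall>i<t. Z i \<subset> Z (Suc i)"
  have closed: "closedin (hull_kernel_top R (Spec R)) (Z i)" and Z_ne: "Z i \<noteq> {}"
    if "i \<le> t" for i
    using Z(1) that unfolding irreducible_closed_def by blast+
  have Z_eq: "Z i = supersets_in (Spec R) (\<Inter>(Z i))" if "i \<le> t" for i
    by (rule closedin_hull_kernel_top_Spec_eq[OF subset_refl closed[OF that]])
  have "\<Inter>(Z i) \<in> Rd R" if "i \<le> t" for i
  proof (rule Inter_Spec_in_Rd)
    show "Z i \<subseteq> Spec R" using Z_eq[OF that] unfolding supersets_in_def by blast
    show "Z i \<noteq> {}" using Z_ne[OF that] .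
  qed
  moreover have "\<Inter>(Z (Suc i)) \<subset> \<Inter>(Z i)" if "i < t" for i
  proof -
    have "Z i \<subset> Z (Suc i)" using Z(2) that by blast
    moreover have "\<Inter>(Z (Suc i)) \<noteq> \<Inter>(Z i)"
      using calculation Z_eq[of i] Z_eq[of "Suc i"] that by (metis Suc_leI less_imp_le_nat less_irrefl)
    ultimately show ?thesis by blast
  qed
  ultimately show "enat t \<le> top_dim (hull_kernel_top R (Rd R))"
    using enat_le_top_dim_hull_kernel_top[OF Rd_psubset_carrier, of t "\<lambda>i. \<Inter>(Z i)"] by blast
qed

end

theorem proposition4p2:
  fixes R :: "('a, 'b) ring_scheme"
  assumes "cring R" and "\<one>\<^bsub>R\<^esub> \<noteq> \<zero>\<^bsub>R\<^esub>"
  shows "(infinite (Spec R) \<longrightarrow> top_dim (hull_kernel_top R (Rd R)) = \<infinity>)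
    \<and> (finite (Spec R) \<longrightarrow> top_dim (hull_kernel_top R (Rd R)) = enat (card (Spec R) - 1))
    \<and> top_dim (hull_kernel_top R (Spec R)) \<le> top_dim (hull_kernel_top R (Rd R))
    \<and> ((\<forall>P\<in>Spec R. \<forall>Q\<in>Spec R. P \<subseteq> Q \<or> Q \<subseteq> P) \<longrightarrow>
         top_dim (hull_kernel_top R (Rd R)) = top_dim (hull_kernel_top R (Spec R)))"
proof -
  interpret cring R by fact
  have "top_dim (hull_kernel_top R (Rd R)) = enat (card (Spec R) - 1)" if fin: "finite (Spec R)"
  proof (rule antisym)
    obtain n where "card (Spec R) = Suc n"
      using Spec_nonempty[OF assms(2)] fin by (metis card_0_eq not0_implies_Suc)
    then show "enat (card (Spec R) - 1) \<le> top_dim (hull_kernel_top R (Rd R))"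
      using enat_le_top_dim_Rd[OF fin order_refl] by simp
  qed (rule top_dim_Rd_le_card_Spec[OF fin])
  then show ?thesis
    using top_dim_Rd_infinite top_dim_Spec_le_top_dim_Rd Rd_eq_Spec_if_Spec_linear by auto
qed

end
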